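(* Let $s \geq 3$ be a fixed integer and $q$ a power of an odd prime. The graph $H^b(s,q)$ contains at least $(1 - o(1)) \frac{ q^{4 ( s - 1) } }{4}$ copies of $K_{2,2}$, where $o(1) \to 0$ as $q \to \infty$.
   Context: Let $N: \mathbb{F}_{q^{s-1}} \to \mathbb{F}_q$ be the norm map $N(X) = X^{1 + q + q^2 + \dots + q^{s - 2}}$. $H^b(s,q)$ is the bipartite graph with parts $A$ and $B$, each a disjoint copy of $\mathbb{F}_{q^{s-1}} \times \mathbb{F}_q^*$, where $(x_1,x_2)\in A$ is adjacent to $(y_1,y_2)\in B$ if and only if $N(x_1+y_1) = x_2 y_2$. *)

theory Defs
  imports Complex_Main "HOL-Algebra.Ring" "HOL-Computational_Algebra.Primes"
begin

definition odd_prime_power :: "nat \<Rightarrow> bool" where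
  "odd_prime_power q \<longleftrightarrow> (\<exists>p k. prime p \<and> odd p \<and> k > 0 \<and> q = p ^ k)"

text \<open>Given a finite field R of order q^(s-1), the subfield F_q is the set of roots of X^q - X.\<close>
definition subfield_q :: "('a, 'b) ring_scheme \<Rightarrow> nat \<Rightarrow> 'a set" where
  "subfield_q R q = {x \<in> carrier R. x [^]\<^bsub>R\<^esub> q = x}"

definition units_q :: "('a, 'b) ring_scheme \<Rightarrow> nat \<Rightarrow> 'a set" where
  "units_q R q = subfield_q R q - {\<zero>\<^bsub>R\<^esub>}"

definition Hb_norm :: "('a, 'b) ring_scheme \<Rightarrow> nat \<Rightarrow> nat \<Rightarrow> 'a \<Rightarrow> 'a" where
  "Hb_norm R q s X = X [^]\<^bsub>R\<^esub> (\<Sum>i<s - 1. q ^ i)"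

text \<open>Vertex set of H^b(s,q): part A = Inl, part B = Inr, each a copy of F_{q^(s-1)} x F_q^*.\<close>
definition Hb_vertices :: "('a, 'b) ring_scheme \<Rightarrow> nat \<Rightarrow> (('a \<times> 'a) + ('a \<times> 'a)) set" where
  "Hb_vertices R q = Inl ` (carrier R \<times> units_q R q) \<union> Inr ` (carrier R \<times> units_q R q)"

fun Hb_adj :: "('a, 'b) ring_scheme \<Rightarrow> nat \<Rightarrow> nat \<Rightarrow>
    (('a \<times> 'a) + ('a \<times> 'a)) \<Rightarrow> (('a \<times> 'a) + ('a \<times> 'a)) \<Rightarrow> bool" where
  "Hb_adj R q s (Inl (x1, x2)) (Inr (y1, y2)) =
     (Hb_norm R q s (x1 \<oplus>\<^bsub>R\<^esub> y1) = x2 \<otimes>\<^bsub>R\<^esub> y2)"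
| "Hb_adj R q s (Inr (y1, y2)) (Inl (x1, x2)) =
     (Hb_norm R q s (x1 \<oplus>\<^bsub>R\<^esub> y1) = x2 \<otimes>\<^bsub>R\<^esub> y2)"
| "Hb_adj R q s _ _ = False"

text \<open>Copies of K_{2,2} in a graph (V, E): a copy is determined by its two sides,
  an unordered pair {P, Q} of disjoint 2-subsets of V with all cross pairs adjacent.\<close>
definition K22_copies :: "'v set \<Rightarrow> ('v \<Rightarrow> 'v \<Rightarrow> bool) \<Rightarrow> 'v set set set" where
  "K22_copies V E = {{P, Q} | P Q. P \<subseteq> V \<and> Q \<subseteq> V \<and> card P = 2 \<and> card Q = 2 \<and>
      P \<inter> Q = {} \<and> (\<forall>x\<in>P. \<forall>y\<in>Q. E x y)}"

end

theory Submission
  imports Defs "HOL-Algebra.Multiplicative_Group"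
begin

text \<open>Write \<open>Q = q^(s-1) = |R|\<close>. Choosing \<open>a, a', c, d \<in> R\<close> and \<open>x \<in> F\<^sub>q\<^sup>*\<close> freely subject to
  \<open>N(a+c) N(a'+d) = N(a+d) N(a'+c)\<close> (all four sums nonzero) determines a unique \<open>K\<^sub>2\<^sub>,\<^sub>2\<close>
  with parts \<open>{(a,x), (a',x')}\<close> and \<open>{(c,y), (d,y')}\<close>. Substituting \<open>a + c = \<alpha> w\<close>,
  \<open>a' + d = b (\<alpha> - 1) w\<close>, \<open>a + d = w\<close> turns the constraint into \<open>N(\<alpha> b) = N(b + 1)\<close>, whose
  solution set in \<open>\<alpha>\<close> is a coset of the kernel of \<open>N\<close>. Since \<open>N\<close> maps \<open>R\<^sup>*\<close> into \<open>F\<^sub>q\<^sup>*\<close>, that kernel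
  has at least \<open>(Q - 1)/q\<close> elements, giving at least \<open>Q (Q-1) (Q-2) (Q-1-3q)\<close> parameter
  tuples; each copy arises from at most four of them, and this is \<open>(1 - o(1)) Q\<^sup>4\<close>.\<close>

lemma card_le_mult_card_image:
  assumes "finite A" and "\<And>y. y \<in> f ` A \<Longrightarrow> card {x \<in> A. f x = y} \<le> k"
  shows "card A \<le> k * card (f ` A)"
proof -
  have "card A \<le> card (\<Union>y\<in>f ` A. {x \<in> A. f x = y})"
    using assms(1) by (intro card_mono) auto
  also have "\<dots> \<le> (\<Sum>y\<in>f ` A. card {x \<in> A. f x = y})"
    by (rule card_UN_le) (use assms(1) in auto)
  also have "\<dots> \<le> (\<Sum>y\<in>f ` A. k)"
    by (rule sum_mono) (rule assms(2))
  finally show ?thesis by (simp add: mult.commute)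
qed

lemma sum_powers_mult_plus_one: "(\<Sum>i<n. q ^ i) * q + 1 = (\<Sum>i<n. q ^ i) + (q::nat) ^ n"
  by (induct n) (simp_all add: algebra_simps)

definition K22_sides :: "'a \<times> 'a \<times> 'b \<times> 'b \<Rightarrow> ('a + 'b) set set" where
  "K22_sides = (\<lambda>(X, X', Y, Y'). {{Inl X, Inl X'}, {Inr Y, Inr Y'}})"

lemma K22_sides_eq_iff:
  "K22_sides (A, A', B, B') = K22_sides (X, X', Y, Y') \<longleftrightarrow>
     {A, A'} = {X, X'} \<and> {B, B'} = {Y, Y'}"
proof -
  have "{Inl A, Inl A'} \<noteq> ({Inr Y, Inr Y'} :: ('a + 'b) set)" by auto
  then have "K22_sides (A, A', B, B') = K22_sides (X, X', Y, Y') \<longleftrightarrow>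
      {Inl A, Inl A'} = ({Inl X, Inl X'} :: ('a + 'b) set) \<and> {Inr B, Inr B'} = ({Inr Y, Inr Y'} :: ('a + 'b) set)"
    unfolding K22_sides_def by (simp add: doubleton_eq_iff)
  also have "\<dots> \<longleftrightarrow> {A, A'} = {X, X'} \<and> {B, B'} = {Y, Y'}"
    by (simp add: doubleton_eq_iff)
  finally show ?thesis .
qed

lemma card_le_4_mult_card_K22_sides:
  assumes "finite T"
  shows "card T \<le> 4 * card (K22_sides ` T)"
proof (rule card_le_mult_card_image[OF assms])
  fix C assume "C \<in> K22_sides ` T"
  then obtain X X' Y Y' where C: "C = K22_sides (X, X', Y, Y')" by auto
  let ?L = "[(X, X', Y, Y'), (X', X, Y, Y'), (X, X', Y', Y), (X', X, Y', Y)]"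
  have "{t \<in> T. K22_sides t = C} \<subseteq> set ?L"
  proof
    fix t assume "t \<in> {t \<in> T. K22_sides t = C}"
    moreover obtain A A' B B' where "t = (A, A', B, B')" by (cases t) auto
    ultimately show "t \<in> set ?L" by (auto simp: C K22_sides_eq_iff doubleton_eq_iff)
  qed
  then have "card {t \<in> T. K22_sides t = C} \<le> card (set ?L)"
    by (intro card_mono) auto
  also have "\<dots> \<le> 4" by (rule order_trans[OF card_length]) simp
  finally show "card {t \<in> T. K22_sides t = C} \<le> 4" .
qed

lemma finite_K22_copies: "finite V \<Longrightarrow> finite (K22_copies V E)"
  by (rule finite_subset[of _ "Pow (Pow V)"]) (auto simp: K22_copies_def)

context field
begin

lemma nonzero_Units [simp]: "x \<in> carrier R \<Longrightarrow> x \<noteq> \<zero> \<Longrightarrow> x \<in> Units R"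
  using field_Units by blast

lemma inv_nonzero: "x \<in> carrier R \<Longrightarrow> x \<noteq> \<zero> \<Longrightarrow> inv x \<noteq> \<zero>"
  using Units_r_inv[of x] by force

lemma mult_nonzero: "x \<in> carrier R \<Longrightarrow> y \<in> carrier R \<Longrightarrow> x \<noteq> \<zero> \<Longrightarrow> y \<noteq> \<zero> \<Longrightarrow> x \<otimes> y \<noteq> \<zero>"
  using integral_iff by auto

lemma pow_nonzero: "x \<in> carrier R \<Longrightarrow> x \<noteq> \<zero> \<Longrightarrow> x [^] (n::nat) \<noteq> \<zero>"
  by (induct n) (auto simp: mult_nonzero)

lemma pow_card_carrier:
  assumes fin: "finite (carrier R)" and x: "x \<in> carrier R"
  shows "x [^] card (carrier R) = x"
proof (cases "x = \<zero>")
  case True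
  have "card (carrier R) \<noteq> 0" using fin zero_closed by (auto simp: card_eq_0_iff)
  then show ?thesis using True by (simp add: nat_pow_zero)
next
  case False
  have "card (carrier R) > 0" using fin zero_closed card_gt_0_iff by blast
  then have "card (carrier R) = Suc (card (Units R))"
    using fin by (simp add: field_Units card_Diff_singleton)
  moreover have "x [^] card (Units R) = \<one>"
    using fin x False by (intro units_power_order_eq_one) (auto simp: field_Units)
  ultimately show ?thesis using x by (simp del: nonzero_Units)
qed

end

locale Hb_field = field R for R (structure) +
  fixes q s :: nat
  assumes finite_carrier: "finite (carrier R)"
    and card_carrier: "card (carrier R) = q ^ (s - 1)"
    and q_ge_2: "q \<ge> 2" and s_ge_2: "s \<ge> 2"
begin

lemma two_le_card_carrier: "2 \<le> q ^ (s - 1)"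
proof -
  have "q ^ 1 \<le> q ^ (s - 1)" using q_ge_2 s_ge_2 by (intro power_increasing) auto
  then show ?thesis using q_ge_2 by simp
qed

abbreviation N :: "'a \<Rightarrow> 'a" where "N \<equiv> Hb_norm R q s"

abbreviation U :: "'a set" where "U \<equiv> units_q R q"

lemma units_q_iff: "x \<in> U \<longleftrightarrow> x \<in> carrier R \<and> x [^] q = x \<and> x \<noteq> \<zero>"
  by (auto simp: units_q_def subfield_q_def)

lemma finite_units_q: "finite U"
  using finite_carrier by (auto simp: units_q_def subfield_q_def)

lemma units_q_mult: "x \<in> U \<Longrightarrow> y \<in> U \<Longrightarrow> x \<otimes> y \<in> U"
  by (simp add: units_q_iff nat_pow_distrib mult_nonzero)

lemma units_q_inv:
  assumes "x \<in> U"
  shows "inv x \<in> U"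
proof -
  have x: "x \<in> carrier R" "x [^] q = x" "x \<noteq> \<zero>" using assms units_q_iff by auto
  have "inv x [^] q \<otimes> x = inv x [^] q \<otimes> x [^] q" using x by simp
  also have "\<dots> = (inv x \<otimes> x) [^] q"
    by (rule nat_pow_distrib[symmetric]) (use x in auto)
  also have "\<dots> = inv x \<otimes> x" using x by simp
  finally have "inv x [^] q = inv x" using x by (simp add: m_rcancel del: Units_l_inv)
  then show ?thesis using x inv_nonzero units_q_iff by auto
qed

lemma card_units_q_le: "card U \<le> q"
proof -
  have "U \<subseteq> {x \<in> carrier R. x [^] (q - 1) = \<one>}"
  proof
    fix x assume "x \<in> U"
    then have x: "x \<in> carrier R" "x [^] q = x" "x \<noteq> \<zero>" using units_q_iff by auto
    have "x [^] (q - 1) \<otimes> x = \<one> \<otimes> x"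
      using x q_ge_2 by (simp add: nat_pow_Suc[symmetric] del: nat_pow_Suc)
    then show "x \<in> {x \<in> carrier R. x [^] (q - 1) = \<one>}"
      using x m_rcancel[of x "x [^] (q - 1)" \<one>] by simp
  qed
  then have "card U \<le> card {x \<in> carrier R. x [^] (q - 1) = \<one>}"
    using finite_carrier by (intro card_mono) auto
  also have "\<dots> \<le> q - 1" using num_roots_le_deg[OF finite_carrier] q_ge_2 by auto
  finally show ?thesis by simp
qed

lemma Hb_norm_mult: "x \<in> carrier R \<Longrightarrow> y \<in> carrier R \<Longrightarrow> N (x \<otimes> y) = N x \<otimes> N y"
  by (simp add: Hb_norm_def nat_pow_distrib)

lemma Hb_norm_closed [simp]: "x \<in> carrier R \<Longrightarrow> N x \<in> carrier R"
  by (simp add: Hb_norm_def)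

lemma Hb_norm_one [simp]: "N \<one> = \<one>"
  by (simp add: Hb_norm_def)

lemma Hb_norm_nonzero: "x \<in> carrier R \<Longrightarrow> x \<noteq> \<zero> \<Longrightarrow> N x \<noteq> \<zero>"
  by (simp add: Hb_norm_def pow_nonzero)

text \<open>The exponent \<open>e = 1 + q + \<dots> + q^(s-2)\<close> of the norm satisfies \<open>e q + 1 = e + |R|\<close>, so
  \<open>N(x)^q x = N(x) x^|R| = N(x) x\<close> by Fermat's little theorem in \<open>R\<close>.\<close>
lemma Hb_norm_in_units_q:
  assumes x: "x \<in> carrier R" "x \<noteq> \<zero>"
  shows "N x \<in> U"
proof -
  define e where "e = (\<Sum>i<s - 1. q ^ i)"
  have "e * q + 1 = e + q ^ (s - 1)"
    unfolding e_def by (rule sum_powers_mult_plus_one)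
  then have "N x [^] q \<otimes> x = x [^] (e + card (carrier R))"
    using x by (simp add: Hb_norm_def e_def nat_pow_pow card_carrier flip: nat_pow_Suc)
  also have "\<dots> = N x \<otimes> x [^] card (carrier R)"
    using x by (simp add: Hb_norm_def e_def nat_pow_mult)
  also have "\<dots> = N x \<otimes> x" by (simp add: pow_card_carrier[OF finite_carrier x(1)])
  finally have "N x [^] q = N x" using x by (simp add: m_rcancel)
  then show ?thesis using x Hb_norm_nonzero units_q_iff by auto
qed

definition norm_kernel :: "'a set" where
  "norm_kernel = {x \<in> carrier R. N x = \<one>}"

lemma card_Hb_norm_fiber:
  assumes g: "g \<in> carrier R" "g \<noteq> \<zero>"
  shows "card {x \<in> carrier R. N x = N g} = card norm_kernel"
proof -
  have "N (inv g) \<otimes> N g = \<one>"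
    using g by (simp flip: Hb_norm_mult)
  then have "bij_betw (\<lambda>k. g \<otimes> k) norm_kernel {x \<in> carrier R. N x = N g}"
    using g by (intro bij_betw_byWitness[where f' = "\<lambda>x. inv g \<otimes> x"])
      (auto simp: norm_kernel_def Hb_norm_mult m_assoc[symmetric])
  then show ?thesis by (simp add: bij_betw_same_card)
qed

lemma card_carrier_le_card_units_q_mult_card_norm_kernel:
  "q ^ (s - 1) \<le> card U * card norm_kernel + 1"
proof -
  let ?S = "carrier R - {\<zero>}"
  have "card ?S \<le> card norm_kernel * card (N ` ?S)"
  proof (rule card_le_mult_card_image)
    fix y assume "y \<in> N ` ?S"
    then obtain g where g: "g \<in> carrier R" "g \<noteq> \<zero>" "y = N g" by auto
    have "card {x \<in> ?S. N x = y} \<le> card {x \<in> carrier R. N x = N g}"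
      using g finite_carrier by (intro card_mono) auto
    then show "card {x \<in> ?S. N x = y} \<le> card norm_kernel"
      using card_Hb_norm_fiber[OF g(1,2)] by simp
  qed (use finite_carrier in simp)
  also have "card (N ` ?S) \<le> card U"
    using Hb_norm_in_units_q finite_units_q by (intro card_mono) auto
  finally have "card (carrier R) - 1 \<le> card U * card norm_kernel"
    using finite_carrier by (simp add: card_Diff_singleton mult.commute)
  then show ?thesis using card_carrier by linarith
qed

lemma add_one_nonzero: "b \<in> carrier R \<Longrightarrow> b \<noteq> \<ominus> \<one> \<Longrightarrow> b \<oplus> \<one> \<noteq> \<zero>"
  by (metis minus_equality one_closed)

definition norm_ratio_set :: "'a \<Rightarrow> 'a set" where
  "norm_ratio_set b = {\<alpha> \<in> carrier R. N (\<alpha> \<otimes> b) = N (b \<oplus> \<one>)} - {\<zero>, \<one>, \<one> \<oplus> inv b}"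

lemma card_norm_kernel_le_card_norm_ratio_set:
  assumes b: "b \<in> carrier R" "b \<noteq> \<zero>" "b \<noteq> \<ominus> \<one>"
  shows "card norm_kernel \<le> card (norm_ratio_set b) + 3"
proof -
  define c where "c = (b \<oplus> \<one>) \<otimes> inv b"
  have c: "c \<in> carrier R" "c \<noteq> \<zero>"
    using b add_one_nonzero[OF b(1,3)] by (auto simp: c_def mult_nonzero inv_nonzero)
  have "N c \<otimes> N b = N (b \<oplus> \<one>)"
    using b by (simp add: c_def m_assoc flip: Hb_norm_mult)
  then have fiber: "{x \<in> carrier R. N x = N c} \<subseteq> {\<alpha> \<in> carrier R. N (\<alpha> \<otimes> b) = N (b \<oplus> \<one>)}"
    using b by (auto simp: Hb_norm_mult)
  have "card norm_kernel = card {x \<in> carrier R. N x = N c}"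
    using card_Hb_norm_fiber[OF c] by simp
  also have "\<dots> \<le> card {\<alpha> \<in> carrier R. N (\<alpha> \<otimes> b) = N (b \<oplus> \<one>)}"
    using fiber finite_carrier by (intro card_mono) auto
  also have "\<dots> \<le> card (norm_ratio_set b) + card {\<zero>, \<one>, \<one> \<oplus> inv b}"
    using diff_card_le_card_Diff[of "{\<zero>, \<one>, \<one> \<oplus> inv b}" "{\<alpha> \<in> carrier R. N (\<alpha> \<otimes> b) = N (b \<oplus> \<one>)}"]
    unfolding norm_ratio_set_def by (simp add: le_diff_conv)
  also have "card {\<zero>, \<one>, \<one> \<oplus> inv b} \<le> 3"
    using card_length[of "[\<zero>, \<one>, \<one> \<oplus> inv b]"] by simp
  finally show ?thesis by simp
qed

text \<open>Given the first coordinates and \<open>x\<close>, three of the four edges force \<open>y\<close>, \<open>y'\<close> and \<open>x'\<close>;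
  the fourth edge then holds exactly when the norm identity does.\<close>
definition K22_completion :: "'a \<Rightarrow> 'a \<Rightarrow> 'a \<Rightarrow> 'a \<Rightarrow> 'a \<Rightarrow> ('a \<times> 'a) \<times> ('a \<times> 'a) \<times> ('a \<times> 'a) \<times> ('a \<times> 'a)" where
  "K22_completion a a' c d x =
     (let y = N (a \<oplus> c) \<otimes> inv x; y' = N (a \<oplus> d) \<otimes> inv x; x' = N (a' \<oplus> c) \<otimes> inv y
      in ((a, x), (a', x'), (c, y), (d, y')))"

lemma K22_completion_edges:
  assumes carr: "a \<in> carrier R" "a' \<in> carrier R" "c \<in> carrier R" "d \<in> carrier R"
    and nonzero: "a \<oplus> c \<noteq> \<zero>" "a \<oplus> d \<noteq> \<zero>" "a' \<oplus> c \<noteq> \<zero>"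
    and norms: "N (a \<oplus> c) \<otimes> N (a' \<oplus> d) = N (a \<oplus> d) \<otimes> N (a' \<oplus> c)"
    and x: "x \<in> U"
  obtains x' y y' where "K22_completion a a' c d x = ((a, x), (a', x'), (c, y), (d, y'))"
    and "x' \<in> U" "y \<in> U" "y' \<in> U"
    and "N (a \<oplus> c) = x \<otimes> y" "N (a \<oplus> d) = x \<otimes> y'"
    and "N (a' \<oplus> c) = x' \<otimes> y" "N (a' \<oplus> d) = x' \<otimes> y'"
proof -
  define y where "y = N (a \<oplus> c) \<otimes> inv x"
  define y' where "y' = N (a \<oplus> d) \<otimes> inv x"
  define x' where "x' = N (a' \<oplus> c) \<otimes> inv y"
  have xc: "x \<in> carrier R" "x \<noteq> \<zero>" using x units_q_iff by auto
  have yU: "y \<in> U" unfolding y_def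
    using Hb_norm_in_units_q nonzero carr units_q_inv[OF x] units_q_mult by simp
  have y'U: "y' \<in> U" unfolding y'_def
    using Hb_norm_in_units_q nonzero carr units_q_inv[OF x] units_q_mult by simp
  have x'U: "x' \<in> U" unfolding x'_def
    using Hb_norm_in_units_q nonzero carr units_q_inv[OF yU] units_q_mult by simp
  have yc: "y \<in> carrier R" "y \<noteq> \<zero>" and y'c: "y' \<in> carrier R" and x'c: "x' \<in> carrier R"
    using yU y'U x'U units_q_iff by auto
  have edge1: "N (a \<oplus> c) = x \<otimes> y"
    unfolding y_def using xc carr m_lcomm[of x "N (a \<oplus> c)" "inv x"] by simp
  have edge2: "N (a \<oplus> d) = x \<otimes> y'"
    unfolding y'_def using xc carr m_lcomm[of x "N (a \<oplus> d)" "inv x"] by simp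
  have edge3: "N (a' \<oplus> c) = x' \<otimes> y"
    unfolding x'_def using yc carr by (simp add: m_assoc)
  have "(x' \<otimes> y') \<otimes> (x \<otimes> y) = (x \<otimes> y') \<otimes> (x' \<otimes> y)"
    using xc yc y'c x'c by algebra
  also have "\<dots> = (x \<otimes> y) \<otimes> N (a' \<oplus> d)"
    using norms by (simp only: edge1 edge2 edge3)
  also have "\<dots> = N (a' \<oplus> d) \<otimes> (x \<otimes> y)"
    using xc yc carr by (intro m_comm) auto
  finally have edge4: "N (a' \<oplus> d) = x' \<otimes> y'"
    using xc yc y'c x'c carr m_rcancel[of "x \<otimes> y" "x' \<otimes> y'" "N (a' \<oplus> d)"]
    by (simp add: mult_nonzero)
  have "K22_completion a a' c d x = ((a, x), (a', x'), (c, y), (d, y'))"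
    by (simp add: K22_completion_def Let_def y_def y'_def x'_def)
  then show ?thesis using x'U yU y'U edge1 edge2 edge3 edge4 by (rule that)
qed

lemma K22_completion_in_K22_copies:
  assumes carr: "a \<in> carrier R" "a' \<in> carrier R" "c \<in> carrier R" "d \<in> carrier R"
    and distinct: "a \<noteq> a'" "c \<noteq> d"
    and nonzero: "a \<oplus> c \<noteq> \<zero>" "a \<oplus> d \<noteq> \<zero>" "a' \<oplus> c \<noteq> \<zero>"
    and norms: "N (a \<oplus> c) \<otimes> N (a' \<oplus> d) = N (a \<oplus> d) \<otimes> N (a' \<oplus> c)"
    and x: "x \<in> U"
  shows "K22_sides (K22_completion a a' c d x) \<in> K22_copies (Hb_vertices R q) (Hb_adj R q s)"
proof -
  obtain x' y y' where completion: "K22_completion a a' c d x = ((a, x), (a', x'), (c, y), (d, y'))"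
    and U: "x' \<in> U" "y \<in> U" "y' \<in> U"
    and edges: "N (a \<oplus> c) = x \<otimes> y" "N (a \<oplus> d) = x \<otimes> y'"
      "N (a' \<oplus> c) = x' \<otimes> y" "N (a' \<oplus> d) = x' \<otimes> y'"
    using K22_completion_edges[OF carr nonzero norms x] by blast
  let ?P = "{Inl (a, x), Inl (a', x')} :: ('a \<times> 'a + 'a \<times> 'a) set"
  let ?Q = "{Inr (c, y), Inr (d, y')} :: ('a \<times> 'a + 'a \<times> 'a) set"
  have "?P \<subseteq> Hb_vertices R q" "?Q \<subseteq> Hb_vertices R q"
    using carr x U by (auto simp: Hb_vertices_def)
  moreover have "card ?P = 2" "card ?Q = 2" "?P \<inter> ?Q = {}"
    using distinct by auto
  moreover have "\<forall>v\<in>?P. \<forall>v'\<in>?Q. Hb_adj R q s v v'"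
    using edges by auto
  moreover have "K22_sides (K22_completion a a' c d x) = {?P, ?Q}"
    by (simp add: completion K22_sides_def)
  ultimately show ?thesis unfolding K22_copies_def by blast
qed

lemma K22_completion_eqD:
  "K22_completion a a' c d x = K22_completion a\<^sub>2 a\<^sub>2' c\<^sub>2 d\<^sub>2 x\<^sub>2 \<Longrightarrow>
     a = a\<^sub>2 \<and> a' = a\<^sub>2' \<and> c = c\<^sub>2 \<and> d = d\<^sub>2 \<and> x = x\<^sub>2"
  by (simp add: K22_completion_def Let_def)

lemma add_minus_cancel_left: "a \<in> carrier R \<Longrightarrow> x \<in> carrier R \<Longrightarrow> a \<oplus> (x \<ominus> a) = x"
  by algebra

text \<open>\<open>u \<oplus> v \<ominus> w = (\<alpha> \<ominus> \<one>) (b \<oplus> \<one>) w\<close> and \<open>u v = (\<alpha> b) (\<alpha> \<ominus> \<one>) w\<^sup>2\<close>, so the norm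
  identity reduces to \<open>N (\<alpha> b) = N (b \<oplus> \<one>)\<close>.\<close>
lemma norm_ratio_set_param:
  assumes b: "b \<in> carrier R" "b \<noteq> \<zero>" "b \<noteq> \<ominus> \<one>" and \<alpha>: "\<alpha> \<in> norm_ratio_set b"
    and w: "w \<in> carrier R" "w \<noteq> \<zero>"
  defines "u \<equiv> \<alpha> \<otimes> w" and "v \<equiv> b \<otimes> (\<alpha> \<ominus> \<one>) \<otimes> w"
  shows "u \<noteq> \<zero>" and "u \<noteq> w" and "v \<noteq> w" and "u \<oplus> v \<ominus> w \<noteq> \<zero>"
    and "N u \<otimes> N v = N w \<otimes> N (u \<oplus> v \<ominus> w)"
proof -
  have \<alpha>c: "\<alpha> \<in> carrier R" "\<alpha> \<noteq> \<zero>" "\<alpha> \<noteq> \<one>" "\<alpha> \<noteq> \<one> \<oplus> inv b"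
    and norm_\<alpha>: "N (\<alpha> \<otimes> b) = N (b \<oplus> \<one>)"
    using \<alpha> by (auto simp: norm_ratio_set_def)
  have \<alpha>1: "\<alpha> \<ominus> \<one> \<noteq> \<zero>" using \<alpha>c by simp
  have b1: "b \<oplus> \<one> \<noteq> \<zero>" using add_one_nonzero b by simp
  have t: "u \<oplus> v \<ominus> w = (\<alpha> \<ominus> \<one>) \<otimes> (b \<oplus> \<one>) \<otimes> w"
    unfolding u_def v_def using \<alpha>c b w by algebra
  show "u \<noteq> \<zero>" unfolding u_def using \<alpha>c w by (simp add: mult_nonzero)
  show "u \<oplus> v \<ominus> w \<noteq> \<zero>" unfolding t using \<alpha>1 b1 \<alpha>c b w by (simp add: mult_nonzero)
  have "(\<alpha> \<ominus> \<one>) \<otimes> w = u \<ominus> w" unfolding u_def using \<alpha>c w by algebra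
  then show "u \<noteq> w" using \<alpha>1 \<alpha>c w by (auto simp: integral_iff a_minus_def r_neg)
  show "v \<noteq> w"
  proof
    assume "v = w"
    moreover have "(b \<otimes> (\<alpha> \<ominus> \<one>) \<ominus> \<one>) \<otimes> w = v \<ominus> w"
      unfolding v_def using \<alpha>c b w by algebra
    ultimately have "b \<otimes> (\<alpha> \<ominus> \<one>) \<ominus> \<one> = \<zero>"
      using \<alpha>c b w by (auto simp: integral_iff a_minus_def r_neg)
    then have "b \<otimes> (\<alpha> \<ominus> \<one>) = \<one>" using \<alpha>c b by simp
    then have "inv b = \<alpha> \<ominus> \<one>" using \<alpha>c b by (intro comm_inv_char) auto
    moreover have "\<alpha> = \<one> \<oplus> (\<alpha> \<ominus> \<one>)" using \<alpha>c by algebra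
    ultimately show False using \<alpha>c(4) by metis
  qed
  define z where "z = (\<alpha> \<ominus> \<one>) \<otimes> (w \<otimes> w)"
  have z: "z \<in> carrier R" unfolding z_def using \<alpha>c w by simp
  have "u \<otimes> v = (\<alpha> \<otimes> b) \<otimes> z" unfolding u_def v_def z_def using \<alpha>c b w by algebra
  have wt: "w \<otimes> (u \<oplus> v \<ominus> w) = (b \<oplus> \<one>) \<otimes> z" unfolding t z_def using \<alpha>c b w by algebra
  have uvc: "u \<in> carrier R" "v \<in> carrier R" unfolding u_def v_def using \<alpha>c b w by auto
  have "N u \<otimes> N v = N (\<alpha> \<otimes> b) \<otimes> N z"
    using uvc \<alpha>c b z \<open>u \<otimes> v = (\<alpha> \<otimes> b) \<otimes> z\<close> by (simp flip: Hb_norm_mult)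
  also have "\<dots> = N ((b \<oplus> \<one>) \<otimes> z)" using norm_\<alpha> b z by (simp add: Hb_norm_mult)
  also have "\<dots> = N w \<otimes> N (u \<oplus> v \<ominus> w)" using wt uvc w by (simp flip: Hb_norm_mult)
  finally show "N u \<otimes> N v = N w \<otimes> N (u \<oplus> v \<ominus> w)" .
qed

definition K22_params :: "('a \<times> 'a \<times> ('a \<times> 'a) \<times> 'a) set" where
  "K22_params = carrier R \<times> (carrier R - {\<zero>}) \<times> (SIGMA b:carrier R - {\<zero>, \<ominus> \<one>}. norm_ratio_set b) \<times> U"

text \<open>The sums \<open>a \<oplus> c\<close>, \<open>a \<oplus> d\<close>, \<open>a' \<oplus> c\<close>, \<open>a' \<oplus> d\<close> of the completed quadruple are
  \<open>u\<close>, \<open>w\<close>, \<open>u \<oplus> v \<ominus> w\<close>, \<open>v\<close>.\<close>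
definition K22_of_param :: "'a \<times> 'a \<times> ('a \<times> 'a) \<times> 'a \<Rightarrow> ('a \<times> 'a) \<times> ('a \<times> 'a) \<times> ('a \<times> 'a) \<times> ('a \<times> 'a)" where
  "K22_of_param = (\<lambda>(a, w, (b, \<alpha>), x).
     let u = \<alpha> \<otimes> w; v = b \<otimes> (\<alpha> \<ominus> \<one>) \<otimes> w
     in K22_completion a (v \<ominus> w \<oplus> a) (u \<ominus> a) (w \<ominus> a) x)"

lemma K22_of_param_in_K22_copies:
  assumes "p \<in> K22_params"
  shows "K22_sides (K22_of_param p) \<in> K22_copies (Hb_vertices R q) (Hb_adj R q s)"
proof -
  obtain a w b \<alpha> x where p: "p = (a, w, (b, \<alpha>), x)" by (cases p) auto
  have a: "a \<in> carrier R" and w: "w \<in> carrier R" "w \<noteq> \<zero>" and x: "x \<in> U"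
    and b: "b \<in> carrier R" "b \<noteq> \<zero>" "b \<noteq> \<ominus> \<one>" and \<alpha>: "\<alpha> \<in> norm_ratio_set b"
    using assms by (auto simp: p K22_params_def)
  have \<alpha>c: "\<alpha> \<in> carrier R" using \<alpha> by (simp add: norm_ratio_set_def)
  define u where "u = \<alpha> \<otimes> w"
  define v where "v = b \<otimes> (\<alpha> \<ominus> \<one>) \<otimes> w"
  note uv = norm_ratio_set_param[OF b \<alpha> w, folded u_def v_def]
  have uvc: "u \<in> carrier R" "v \<in> carrier R" unfolding u_def v_def using \<alpha>c b w by auto
  have sums: "a \<oplus> (u \<ominus> a) = u" "a \<oplus> (w \<ominus> a) = w"
      "(v \<ominus> w \<oplus> a) \<oplus> (u \<ominus> a) = u \<oplus> v \<ominus> w" "(v \<ominus> w \<oplus> a) \<oplus> (w \<ominus> a) = v"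
    using a w(1) uvc by algebra+
  have "a \<noteq> v \<ominus> w \<oplus> a" using sums(2,4) uv(3) by metis
  moreover have "u \<ominus> a \<noteq> w \<ominus> a" using sums(1,2) uv(2) by metis
  ultimately have "K22_sides (K22_completion a (v \<ominus> w \<oplus> a) (u \<ominus> a) (w \<ominus> a) x)
      \<in> K22_copies (Hb_vertices R q) (Hb_adj R q s)"
    using a w uvc uv x by (intro K22_completion_in_K22_copies) (simp_all add: sums)
  then show ?thesis by (simp add: p K22_of_param_def u_def v_def)
qed

lemma inj_on_K22_of_param: "inj_on K22_of_param K22_params"
proof (rule inj_onI)
  fix p1 p2 assume p1: "p1 \<in> K22_params" and p2: "p2 \<in> K22_params"
    and eq: "K22_of_param p1 = K22_of_param p2"
  obtain a1 w1 b1 \<alpha>1 x1 where P1: "p1 = (a1, w1, (b1, \<alpha>1), x1)" by (cases p1) auto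
  obtain a2 w2 b2 \<alpha>2 x2 where P2: "p2 = (a2, w2, (b2, \<alpha>2), x2)" by (cases p2) auto
  have c1: "a1 \<in> carrier R" "w1 \<in> carrier R" "w1 \<noteq> \<zero>" "b1 \<in> carrier R" "\<alpha>1 \<in> carrier R" "\<alpha>1 \<noteq> \<one>"
    using p1 by (auto simp: P1 K22_params_def norm_ratio_set_def)
  have c2: "a2 \<in> carrier R" "w2 \<in> carrier R" "b2 \<in> carrier R" "\<alpha>2 \<in> carrier R"
    using p2 by (auto simp: P2 K22_params_def norm_ratio_set_def)
  define u1 v1 u2 v2 where "u1 = \<alpha>1 \<otimes> w1" and "v1 = b1 \<otimes> (\<alpha>1 \<ominus> \<one>) \<otimes> w1"
    and "u2 = \<alpha>2 \<otimes> w2" and "v2 = b2 \<otimes> (\<alpha>2 \<ominus> \<one>) \<otimes> w2"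
  have uvc: "u1 \<in> carrier R" "v1 \<in> carrier R" "u2 \<in> carrier R" "v2 \<in> carrier R"
    using c1 c2 by (simp_all add: u1_def v1_def u2_def v2_def)
  have "K22_completion a1 (v1 \<ominus> w1 \<oplus> a1) (u1 \<ominus> a1) (w1 \<ominus> a1) x1
      = K22_completion a2 (v2 \<ominus> w2 \<oplus> a2) (u2 \<ominus> a2) (w2 \<ominus> a2) x2"
    using eq by (simp add: P1 P2 K22_of_param_def u1_def v1_def u2_def v2_def)
  then have a: "a1 = a2" and a': "v1 \<ominus> w1 \<oplus> a1 = v2 \<ominus> w2 \<oplus> a2"
    and c: "u1 \<ominus> a1 = u2 \<ominus> a2" and d: "w1 \<ominus> a1 = w2 \<ominus> a2" and x: "x1 = x2"
    by (auto dest: K22_completion_eqD)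
  have w: "w1 = w2"
    using d c1 c2 add_minus_cancel_left[of a1 w1] add_minus_cancel_left[of a1 w2] by (simp add: a)
  have "\<alpha>1 \<otimes> w1 = \<alpha>2 \<otimes> w1"
    using c uvc c1 add_minus_cancel_left[of a1 u1] add_minus_cancel_left[of a1 u2]
    by (simp add: a u1_def u2_def w)
  then have \<alpha>: "\<alpha>1 = \<alpha>2" using c1 c2 m_rcancel[of w1 \<alpha>1 \<alpha>2] by simp
  have "v1 = (v1 \<ominus> w1 \<oplus> a1) \<oplus> (w1 \<ominus> a1)" "v2 = (v2 \<ominus> w2 \<oplus> a2) \<oplus> (w2 \<ominus> a2)"
    using uvc c1(1,2) c2(1,2) by algebra+
  then have "(b1 \<otimes> (\<alpha>1 \<ominus> \<one>)) \<otimes> w1 = (b2 \<otimes> (\<alpha>1 \<ominus> \<one>)) \<otimes> w1"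
    using a' d by (simp add: v1_def v2_def w \<alpha>)
  then have "b1 \<otimes> (\<alpha>1 \<ominus> \<one>) = b2 \<otimes> (\<alpha>1 \<ominus> \<one>)" using c1 c2 m_rcancel[of w1] by simp
  then have b: "b1 = b2" using c1 c2 m_rcancel[of "\<alpha>1 \<ominus> \<one>" b1 b2] by simp
  show "p1 = p2" using a w b \<alpha> x by (simp add: P1 P2)
qed

lemma card_K22_params:
  "card K22_params = q ^ (s - 1) * ((q ^ (s - 1) - 1) *
     ((\<Sum>b\<in>carrier R - {\<zero>, \<ominus> \<one>}. card (norm_ratio_set b)) * card U))"
proof -
  have "card (SIGMA b:carrier R - {\<zero>, \<ominus> \<one>}. norm_ratio_set b)
      = (\<Sum>b\<in>carrier R - {\<zero>, \<ominus> \<one>}. card (norm_ratio_set b))"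
    using finite_carrier by (intro card_SigmaI) (auto simp: norm_ratio_set_def)
  then show ?thesis
    using finite_carrier by (simp add: K22_params_def card_cartesian_product card_Diff_singleton card_carrier)
qed

lemma sum_card_norm_ratio_set_ge:
  "(real (q ^ (s - 1)) - 2) * (real (card norm_kernel) - 3)
     \<le> (\<Sum>b\<in>carrier R - {\<zero>, \<ominus> \<one>}. real (card (norm_ratio_set b)))"
  (is "(?Q - 2) * (?K - 3) \<le> ?S")
proof (cases "?K \<ge> 3")
  case True
  let ?B = "carrier R - {\<zero>, \<ominus> \<one>}"
  have "card (carrier R) - card {\<zero>, \<ominus> \<one>} \<le> card ?B" by (rule diff_card_le_card_Diff) simp
  moreover have "card {\<zero>, \<ominus> \<one>} \<le> 2" using card_length[of "[\<zero>, \<ominus> \<one>]"] by simp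
  ultimately have "q ^ (s - 1) \<le> card ?B + 2" using card_carrier by linarith
  then have "?Q \<le> real (card ?B + 2)" by (simp only: of_nat_le_iff)
  then have "?Q - 2 \<le> real (card ?B)" by simp
  then have "(?Q - 2) * (?K - 3) \<le> real (card ?B) * (?K - 3)"
    using True by (intro mult_right_mono) auto
  also have "\<dots> = (\<Sum>b\<in>?B. ?K - 3)" by simp
  also have "\<dots> \<le> ?S"
    using card_norm_kernel_le_card_norm_ratio_set by (intro sum_mono) fastforce
  finally show ?thesis .
next
  case False
  have "?Q \<ge> 2" using of_nat_mono[OF two_le_card_carrier] by simp
  then have "(?Q - 2) * (?K - 3) \<le> 0" using False by (intro mult_nonneg_nonpos) auto
  also have "0 \<le> ?S" by (intro sum_nonneg) simp
  finally show ?thesis .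
qed

lemma card_K22_params_ge:
  defines "Q \<equiv> real (q ^ (s - 1))"
  shows "Q * (Q - 1) * (Q - 2) * (Q - 1 - 3 * real q) \<le> real (card K22_params)"
proof -
  define S where "S = (\<Sum>b\<in>carrier R - {\<zero>, \<ominus> \<one>}. real (card (norm_ratio_set b)))"
  define K where "K = real (card norm_kernel)"
  define V where "V = real (card U)"
  have Q1: "Q \<ge> 2" unfolding Q_def using of_nat_mono[OF two_le_card_carrier] by simp
  have "Q \<le> real (card U * card norm_kernel + 1)"
    unfolding Q_def using card_carrier_le_card_units_q_mult_card_norm_kernel by (simp only: of_nat_le_iff)
  then have "Q - 1 \<le> V * K" unfolding V_def K_def by simp
  moreover have "V \<le> real q" unfolding V_def using card_units_q_le by simp
  ultimately have "Q - 1 - 3 * real q \<le> (K - 3) * V" by (simp add: algebra_simps)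
  then have "(Q - 2) * (Q - 1 - 3 * real q) \<le> (Q - 2) * ((K - 3) * V)"
    using Q1 by (intro mult_left_mono) auto
  also have "\<dots> \<le> S * V"
    using sum_card_norm_ratio_set_ge unfolding Q_def K_def S_def V_def
    by (simp add: mult.assoc[symmetric] mult_right_mono)
  finally have "(Q - 2) * (Q - 1 - 3 * real q) \<le> S * V" .
  then have "Q * (Q - 1) * ((Q - 2) * (Q - 1 - 3 * real q)) \<le> Q * (Q - 1) * (S * V)"
    using Q1 by (intro mult_left_mono) auto
  also have "\<dots> = real (card K22_params)"
    using of_nat_diff[of 1 "q ^ (s - 1)"] two_le_card_carrier
    unfolding card_K22_params Q_def S_def V_def by simp
  finally show ?thesis by (simp add: mult.assoc)
qed

lemma card_K22_copies_ge:
  defines "Q \<equiv> real (q ^ (s - 1))"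
  shows "Q * (Q - 1) * (Q - 2) * (Q - 1 - 3 * real q)
    \<le> 4 * real (card (K22_copies (Hb_vertices R q) (Hb_adj R q s)))"
proof -
  have fin_params: "finite K22_params"
    using finite_carrier finite_units_q by (auto simp: K22_params_def norm_ratio_set_def)
  have fin_vertices: "finite (Hb_vertices R q)"
    using finite_carrier finite_units_q by (simp add: Hb_vertices_def)
  have "card K22_params = card (K22_of_param ` K22_params)"
    by (rule card_image[OF inj_on_K22_of_param, symmetric])
  also have "\<dots> \<le> 4 * card (K22_sides ` K22_of_param ` K22_params)"
    using fin_params by (intro card_le_4_mult_card_K22_sides) simp
  also have "card (K22_sides ` K22_of_param ` K22_params)
      \<le> card (K22_copies (Hb_vertices R q) (Hb_adj R q s))"
    using K22_of_param_in_K22_copies finite_K22_copies[OF fin_vertices] by (intro card_mono) auto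
  finally have "real (card K22_params) \<le> real (4 * card (K22_copies (Hb_vertices R q) (Hb_adj R q s)))"
    by (simp only: of_nat_le_iff)
  then show ?thesis using card_K22_params_ge unfolding Q_def by simp
qed

end

lemma power4_le_mult4:
  fixes m a b c d :: real
  assumes "0 \<le> m" "m \<le> a" "m \<le> b" "m \<le> c" "m \<le> d"
  shows "m ^ 4 \<le> a * b * c * d"
proof -
  have "m * m \<le> a * b" "m * m \<le> c * d" using assms by (auto intro: mult_mono)
  then have "(m * m) * (m * m) \<le> (a * b) * (c * d)" using assms by (intro mult_mono) auto
  then show ?thesis by (simp add: power4_eq_xxxx mult.assoc)
qed

text \<open>Every factor is at least \<open>Q - 4 r \<ge> (1 - 4 / r) Q\<close>, and \<open>(1 - 4 / r)\<^sup>4 \<ge> 1 - 16 / r\<close>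
  by Bernoulli's inequality.\<close>
lemma fourth_power_approx_le:
  fixes Q r \<epsilon> :: real
  assumes r: "r \<ge> 4" "r \<ge> 16 / \<epsilon>" and \<epsilon>: "\<epsilon> > 0" and Q: "Q \<ge> r ^ 2"
  shows "(1 - \<epsilon>) * Q ^ 4 \<le> Q * (Q - 1) * (Q - 2) * (Q - 1 - 3 * r)"
proof -
  define x where "x = 1 - 4 / r"
  have x: "0 \<le> x" unfolding x_def using r by (simp add: field_simps)
  have "r \<le> Q / r" using Q r by (simp add: field_simps power2_eq_square)
  then have Qx: "Q * x \<le> Q - 4 * r" unfolding x_def using r by (simp add: field_simps)
  have "4 * r \<le> r * r" using r by (intro mult_right_mono) auto
  then have "0 \<le> Q - 4 * r" using Q by (simp add: power2_eq_square)
  then have prod: "(Q - 4 * r) ^ 4 \<le> Q * (Q - 1) * (Q - 2) * (Q - 1 - 3 * r)"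
    using r by (intro power4_le_mult4) auto
  have "1 + real 4 * (- 4 / r) \<le> (1 + (- 4 / r)) ^ 4"
    by (rule Bernoulli_inequality) (use r in \<open>simp add: field_simps\<close>)
  then have "1 - 16 / r \<le> x ^ 4" unfolding x_def by simp
  moreover have "1 - \<epsilon> \<le> 1 - 16 / r" using r \<epsilon> by (simp add: field_simps)
  ultimately have "1 - \<epsilon> \<le> x ^ 4" by linarith
  then have "(1 - \<epsilon>) * Q ^ 4 \<le> x ^ 4 * Q ^ 4" by (intro mult_right_mono) auto
  also have "\<dots> = (Q * x) ^ 4" by (simp add: power_mult_distrib)
  also have "\<dots> \<le> (Q - 4 * r) ^ 4"
  proof -
    have "0 \<le> Q" using Q zero_le_power2[of r] by linarith
    then show ?thesis using Qx x by (intro power_mono) auto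
  qed
  finally show ?thesis using prod by linarith
qed

lemma (in Hb_field) card_K22_copies_asymptotic:
  assumes "s \<ge> 3" and "q \<ge> 4" and "real q \<ge> 16 / \<epsilon>" and "\<epsilon> > 0"
  shows "(1 - \<epsilon>) * real q ^ (4 * (s - 1)) / 4
    \<le> real (card (K22_copies (Hb_vertices R q) (Hb_adj R q s)))"
proof -
  have "q ^ 2 \<le> q ^ (s - 1)" using assms by (intro power_increasing) auto
  then have "real q ^ 2 \<le> real (q ^ (s - 1))" by (metis of_nat_le_iff of_nat_power)
  then have "(1 - \<epsilon>) * real (q ^ (s - 1)) ^ 4 \<le> real (q ^ (s - 1)) * (real (q ^ (s - 1)) - 1) *
      (real (q ^ (s - 1)) - 2) * (real (q ^ (s - 1)) - 1 - 3 * real q)"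
    using assms by (intro fourth_power_approx_le) auto
  also have "\<dots> \<le> 4 * real (card (K22_copies (Hb_vertices R q) (Hb_adj R q s)))"
    by (rule card_K22_copies_ge)
  moreover have "real q ^ (4 * (s - 1)) = real (q ^ (s - 1)) ^ 4"
    by (simp add: power_mult[symmetric] mult.commute)
  ultimately show ?thesis by simp
qed

theorem lemma4p5:
  fixes s :: nat
  assumes "s \<ge> 3"
  shows "\<forall>\<epsilon>::real. \<epsilon> > 0 \<longrightarrow> (\<exists>Q::nat. \<forall>q (R :: nat ring).
           q \<ge> Q \<and> odd_prime_power q \<and> field R \<and> finite (carrier R) \<and>
           card (carrier R) = q ^ (s - 1) \<longrightarrow>
           real (card (K22_copies (Hb_vertices R q) (Hb_adj R q s)))
             \<ge> (1 - \<epsilon>) * real q ^ (4 * (s - 1)) / 4)"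
proof (intro allI impI)
  fix \<epsilon> :: real assume \<epsilon>: "\<epsilon> > 0"
  have "real (card (K22_copies (Hb_vertices R q) (Hb_adj R q s))) \<ge> (1 - \<epsilon>) * real q ^ (4 * (s - 1)) / 4"
    if q: "q \<ge> nat \<lceil>16 / \<epsilon>\<rceil> + 4" and R: "field R" "finite (carrier R)" "card (carrier R) = q ^ (s - 1)"
    for q and R :: "nat ring"
  proof -
    interpret Hb_field R q s
      using R q assms by (intro Hb_field.intro Hb_field_axioms.intro) auto
    have "16 / \<epsilon> \<le> real q" using q real_nat_ceiling_ge[of "16 / \<epsilon>"] by linarith
    then show ?thesis using assms q \<epsilon> by (intro card_K22_copies_asymptotic) auto
  qed
  then show "\<exists>Q::nat. \<forall>q (R :: nat ring). q \<ge> Q \<and> odd_prime_power q \<and> field R \<and> finite (carrier R) \<and>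
      card (carrier R) = q ^ (s - 1) \<longrightarrow>
      real (card (K22_copies (Hb_vertices R q) (Hb_adj R q s))) \<ge> (1 - \<epsilon>) * real q ^ (4 * (s - 1)) / 4"
    by blast
qed

end
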